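(* Let $X$ be a normed space and $Y$ a Banach space. Let $p$ and $\theta$ be nonnegative integer numbers with $p\neq1,3$. Suppose that an odd mapping $f:X\to Y$ satisfies $$\|D_f(x,y)\|\le\theta\left(\|x\|^p+\|y\|^p\right)$$ for all $x,y\in X$. Then there exist a unique additive function $A:X\to Y$ and a unique cubic function $C:X\to Y$ satisfying $$\|f(x)-A(x)-C(x)\|\le\frac{\theta}{6}\left[\frac{1}{|2^p-2|}+\frac{1}{|2^p-8|}\right]\|x\|^p$$ for all $x\in X$.
   Context: For a mapping $f:X\to Y$ define $$D_f(x,y)=3f(x+3y)-f(3x+y)-12[f(x+y)+f(x-y)]+16[f(x)+f(y)]-12f(2y)+4f(2x)$$ for $x,y\in X$. A function $g:X\to Y$ is additive if $g(x+y)=g(x)+g(y)$ for all $x,y\in X$, and cubic if $g(x+2y)-3g(x+y)+3g(x)-g(x-y)=6g(y)$ for all $x,y\in X$. *)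

theory Defs
  imports "HOL-Analysis.Analysis"
begin

definition Dfun :: "('a::real_vector \<Rightarrow> 'b::real_vector) \<Rightarrow> 'a \<Rightarrow> 'a \<Rightarrow> 'b" where
  "Dfun f x y = 3 *\<^sub>R f (x + 3 *\<^sub>R y) - f (3 *\<^sub>R x + y)
     - 12 *\<^sub>R (f (x + y) + f (x - y)) + 16 *\<^sub>R (f x + f y)
     - 12 *\<^sub>R f (2 *\<^sub>R y) + 4 *\<^sub>R f (2 *\<^sub>R x)"

definition is_additive :: "('a::real_vector \<Rightarrow> 'b::real_vector) \<Rightarrow> bool" where
  "is_additive g \<longleftrightarrow> (\<forall>x y. g (x + y) = g x + g y)"

definition is_cubic :: "('a::real_vector \<Rightarrow> 'b::real_vector) \<Rightarrow> bool" where
  "is_cubic g \<longleftrightarrow> (\<forall>x y. g (x + 2 *\<^sub>R y) - 3 *\<^sub>R g (x + y) + 3 *\<^sub>R g x - g (x - y) = 6 *\<^sub>R g y)"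

end

theory Submission
  imports Defs
begin

text \<open>Setting \<open>y = x\<close> in \<open>D\<^sub>f\<close> shows that \<open>w(x) = f(4x) - 10 f(2x) + 16 f(x)\<close> is bounded by
\<open>\<theta> \<parallel>x\<parallel>\<^sup>p\<close>. Writing \<open>f = u + v\<close> with \<open>6u(x) = f(2x) - 2f(x)\<close> and \<open>6v(x) = 8f(x) - f(2x)\<close>, one has
\<open>u(2x) - 8u(x) = w(x)/6\<close> and \<open>v(2x) - 2v(x) = -w(x)/6\<close>. Since \<open>2\<^sup>p \<noteq> 8, 2\<close>, Hyers' direct
method yields limits \<open>C\<close> and \<open>A\<close> of rescalings of \<open>u\<close> and \<open>v\<close> that are 8- and 2-homogeneous odd
solutions of \<open>D = 0\<close>; on the plane spanned by two vectors, a suitable linear combination of instances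
of \<open>D = 0\<close> is exactly the cubic, resp. additive, equation. For uniqueness, the difference of two
solutions is the sum of a 2- and an 8-homogeneous map of size \<open>O(\<parallel>x\<parallel>\<^sup>p)\<close>; each part is again
\<open>O(\<parallel>x\<parallel>\<^sup>p)\<close>, and iterating the homogeneity towards \<open>0\<close> or \<open>\<infinity>\<close> forces it to vanish.\<close>

text \<open>The simplifier does not collect like terms under \<open>*\<^sub>R\<close>. Identities between linear
combinations of finitely many vectors are therefore checked coefficientwise, after every vector has
been written as a combination of a fixed list of atoms.\<close>

definition lincomb :: "'b::real_vector list \<Rightarrow> (nat \<Rightarrow> real) \<Rightarrow> 'b" where
  "lincomb vs c = (\<Sum>i<length vs. c i *\<^sub>R vs ! i)"

lemma lincomb_add: "lincomb vs c + lincomb vs d = lincomb vs (\<lambda>i. c i + d i)"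
  by (simp add: lincomb_def sum.distrib scaleR_add_left)

lemma lincomb_diff: "lincomb vs c - lincomb vs d = lincomb vs (\<lambda>i. c i - d i)"
  by (simp add: lincomb_def sum_subtractf scaleR_diff_left)

lemma lincomb_scaleR: "k *\<^sub>R lincomb vs c = lincomb vs (\<lambda>i. k * c i)"
  by (simp add: lincomb_def scaleR_sum_right)

lemma lincomb_minus: "- lincomb vs c = lincomb vs (\<lambda>i. - c i)"
  by (simp add: lincomb_def sum_negf)

lemmas lincomb_arith = lincomb_add lincomb_diff lincomb_scaleR lincomb_minus

lemma lincomb_cong: "(\<And>i. i < length vs \<Longrightarrow> c i = d i) \<Longrightarrow> lincomb vs c = lincomb vs d"
  by (simp add: lincomb_def)

lemma lincomb_unit:
  assumes "k < length vs"
  shows "lincomb vs (\<lambda>i. of_bool (i = k)) = vs ! k"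
proof -
  have "lincomb vs (\<lambda>i. of_bool (i = k)) = (\<Sum>i<length vs. if i = k then vs ! i else 0)"
    unfolding lincomb_def by (rule sum.cong) auto
  with assms show ?thesis by simp
qed

section \<open>Odd homogeneous solutions of \<open>D = 0\<close>\<close>

lemma odd_fun_zero:
  fixes f :: "'a::real_vector \<Rightarrow> 'b::real_vector"
  assumes "\<And>x. f (- x) = - f x"
  shows "f 0 = 0"
proof -
  have "f 0 + f 0 = 0" using assms[of 0] by (simp only: minus_zero eq_neg_iff_add_eq_0)
  then show ?thesis by (simp flip: scaleR_2)
qed

lemma Dfun_plane:
  fixes F :: "'a::real_vector \<Rightarrow> 'b::real_vector"
  assumes \<Phi>_def: "\<Phi> = (\<lambda>a b. F (a *\<^sub>R x + b *\<^sub>R y))"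
  shows "Dfun F (a1 *\<^sub>R x + b1 *\<^sub>R y) (a2 *\<^sub>R x + b2 *\<^sub>R y) =
    3 *\<^sub>R \<Phi> (a1 + 3*a2) (b1 + 3*b2) - \<Phi> (3*a1 + a2) (3*b1 + b2)
    - 12 *\<^sub>R (\<Phi> (a1 + a2) (b1 + b2) + \<Phi> (a1 - a2) (b1 - b2)) + 16 *\<^sub>R (\<Phi> a1 b1 + \<Phi> a2 b2)
    - 12 *\<^sub>R \<Phi> (2*a2) (2*b2) + 4 *\<^sub>R \<Phi> (2*a1) (2*b1)"
  unfolding Dfun_def \<Phi>_def by (simp add: algebra_simps)

lemma Dfun_zero_imp_is_cubic:
  fixes F :: "'a::real_vector \<Rightarrow> 'b::real_vector"
  assumes odd: "\<And>z. F (- z) = - F z" and D0: "\<And>u v. Dfun F u v = 0"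
    and dbl: "\<And>z. F (2 *\<^sub>R z) = 8 *\<^sub>R F z"
  shows "is_cubic F"
  unfolding is_cubic_def
proof (intro allI)
  fix x y
  define \<Phi> where "\<Phi> = (\<lambda>a b. F (a *\<^sub>R x + b *\<^sub>R y))"
  have neg: "\<Phi> (-a) (-b) = - \<Phi> a b" for a b
    unfolding \<Phi>_def scaleR_minus_left minus_add_distrib[symmetric] by (rule odd)
  have dbl': "\<Phi> (2*a) (2*b) = 8 *\<^sub>R \<Phi> a b" for a b
    using dbl[of "a *\<^sub>R x + b *\<^sub>R y"] by (simp add: \<Phi>_def scaleR_add_right)
  have zero: "\<Phi> 0 0 = 0" using odd_fun_zero[of F, OF odd] by (simp add: \<Phi>_def)
  \<comment> \<open>The coefficients below solve a linear system in the values of \<open>\<Phi>\<close> on a small lattice;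
    the \<open>reductions\<close> bring every value that occurs back to the atoms \<open>vs\<close>.\<close>
  define vs where "vs = [\<Phi> 0 1, \<Phi> 1 (-2), \<Phi> 1 (-1), \<Phi> 1 0, \<Phi> 1 1, \<Phi> 1 2]"
  have atoms: "\<Phi> 0 1 = lincomb vs (\<lambda>i. of_bool (i = 0))" "\<Phi> 1 (-2) = lincomb vs (\<lambda>i. of_bool (i = 1))"
    "\<Phi> 1 (-1) = lincomb vs (\<lambda>i. of_bool (i = 2))" "\<Phi> 1 0 = lincomb vs (\<lambda>i. of_bool (i = 3))"
    "\<Phi> 1 1 = lincomb vs (\<lambda>i. of_bool (i = 4))" "\<Phi> 1 2 = lincomb vs (\<lambda>i. of_bool (i = 5))"
    by (simp_all add: lincomb_unit vs_def)
  note reductions = neg[of 1 2] neg[of 0 1] neg[of 1 0] neg[of 1 1] neg[of 1 "-1"] neg[of 1 "-2"]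
    dbl'[of 1 "-2"] dbl'[of "-1" "-2"] dbl'[of 0 "-1"] dbl'[of "-1" 0] dbl'[of 1 "-1"]
    dbl'[of "-1" "-1"] dbl'[of 1 2] dbl'[of "-1" 2] dbl'[of 0 1] dbl'[of 1 1] dbl'[of "-1" 1]
  have "\<Phi> 1 2 - 3 *\<^sub>R \<Phi> 1 1 + 3 *\<^sub>R \<Phi> 1 0 - \<Phi> 1 (-1) - 6 *\<^sub>R \<Phi> 0 1 =
      (-1/64) *\<^sub>R Dfun F ((-1) *\<^sub>R x + (-1) *\<^sub>R y) (1 *\<^sub>R x + (-1) *\<^sub>R y)
    + (3/64) *\<^sub>R Dfun F ((-1) *\<^sub>R x + 1 *\<^sub>R y) (1 *\<^sub>R x + 1 *\<^sub>R y)"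
    unfolding Dfun_plane[OF \<Phi>_def]
    by (simp add: reductions[simplified] zero atoms lincomb_arith del: of_nat_numeral)
      (rule lincomb_cong, simp add: vs_def less_Suc_eq numeral_eq_Suc)
  then show "F (x + 2 *\<^sub>R y) - 3 *\<^sub>R F (x + y) + 3 *\<^sub>R F x - F (x - y) = 6 *\<^sub>R F y"
    by (simp add: D0 \<Phi>_def algebra_simps)
qed

lemma Dfun_zero_imp_is_additive:
  fixes F :: "'a::real_vector \<Rightarrow> 'b::real_vector"
  assumes odd: "\<And>z. F (- z) = - F z" and D0: "\<And>u v. Dfun F u v = 0"
    and dbl: "\<And>z. F (2 *\<^sub>R z) = 2 *\<^sub>R F z"
  shows "is_additive F"
  unfolding is_additive_def
proof (intro allI)
  fix x y
  define \<Phi> where "\<Phi> = (\<lambda>a b. F (a *\<^sub>R x + b *\<^sub>R y))"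
  have neg: "\<Phi> (-a) (-b) = - \<Phi> a b" for a b
    unfolding \<Phi>_def scaleR_minus_left minus_add_distrib[symmetric] by (rule odd)
  have dbl': "\<Phi> (2*a) (2*b) = 2 *\<^sub>R \<Phi> a b" for a b
    using dbl[of "a *\<^sub>R x + b *\<^sub>R y"] by (simp add: \<Phi>_def scaleR_add_right)
  have zero: "\<Phi> 0 0 = 0" using odd_fun_zero[of F, OF odd] by (simp add: \<Phi>_def)
  define vs where "vs = [\<Phi> 0 1, \<Phi> 1 (-2), \<Phi> 1 (-1), \<Phi> 1 0, \<Phi> 1 1, \<Phi> 1 2,
    \<Phi> 2 (-1), \<Phi> 2 1, \<Phi> 2 3, \<Phi> 3 (-2)]"
  have atoms: "\<Phi> 0 1 = lincomb vs (\<lambda>i. of_bool (i = 0))" "\<Phi> 1 (-2) = lincomb vs (\<lambda>i. of_bool (i = 1))"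
    "\<Phi> 1 (-1) = lincomb vs (\<lambda>i. of_bool (i = 2))" "\<Phi> 1 0 = lincomb vs (\<lambda>i. of_bool (i = 3))"
    "\<Phi> 1 1 = lincomb vs (\<lambda>i. of_bool (i = 4))" "\<Phi> 1 2 = lincomb vs (\<lambda>i. of_bool (i = 5))"
    "\<Phi> 2 (-1) = lincomb vs (\<lambda>i. of_bool (i = 6))" "\<Phi> 2 1 = lincomb vs (\<lambda>i. of_bool (i = 7))"
    "\<Phi> 2 3 = lincomb vs (\<lambda>i. of_bool (i = 8))" "\<Phi> 3 (-2) = lincomb vs (\<lambda>i. of_bool (i = 9))"
    by (simp_all add: lincomb_unit vs_def)
  note reductions = neg[of 2 "-1"] neg[of 2 1] neg[of 1 0] neg[of 0 1] neg[of 1 1] neg[of 1 "-1"]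
    neg[of 2 3] neg[of 1 2] neg[of 1 "-2"] neg[of 3 "-2"]
    dbl'[of "-2" 1] dbl'[of "-2" "-1"] dbl'[of "-1" 0] dbl'[of 0 "-1"] dbl'[of "-1" 1]
    dbl'[of "-1" "-1"] dbl'[of 1 0] dbl'[of 1 "-2"] dbl'[of "-1" "-2"] dbl'[of 1 "-1"]
    dbl'[of 0 1] dbl'[of 1 1] dbl'[of 1 2] dbl'[of "-1" 2]
  have "\<Phi> 1 1 - \<Phi> 1 0 - \<Phi> 0 1 =
      (-1/64) *\<^sub>R Dfun F ((-1) *\<^sub>R x + (-1) *\<^sub>R y) ((-1) *\<^sub>R x + 1 *\<^sub>R y)
    + (-1/64) *\<^sub>R Dfun F ((-1) *\<^sub>R x + (-1) *\<^sub>R y) (1 *\<^sub>R x + 0 *\<^sub>R y)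
    + (-5/192) *\<^sub>R Dfun F ((-1) *\<^sub>R x + (-1) *\<^sub>R y) (1 *\<^sub>R x + (-1) *\<^sub>R y)
    + (-5/192) *\<^sub>R Dfun F ((-1) *\<^sub>R x + 1 *\<^sub>R y) ((-1) *\<^sub>R x + (-1) *\<^sub>R y)
    + (1/192) *\<^sub>R Dfun F ((-1) *\<^sub>R x + 0 *\<^sub>R y) (1 *\<^sub>R x + 1 *\<^sub>R y)
    + (1/64) *\<^sub>R Dfun F ((-1) *\<^sub>R x + 1 *\<^sub>R y) (1 *\<^sub>R x + 1 *\<^sub>R y)
    + (1/192) *\<^sub>R Dfun F (0 *\<^sub>R x + (-1) *\<^sub>R y) ((-1) *\<^sub>R x + 1 *\<^sub>R y)
    + (1/64) *\<^sub>R Dfun F ((-1) *\<^sub>R x + 1 *\<^sub>R y) (0 *\<^sub>R x + (-1) *\<^sub>R y)"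
    unfolding Dfun_plane[OF \<Phi>_def]
    by (simp add: reductions[simplified] zero atoms lincomb_arith del: of_nat_numeral)
      (rule lincomb_cong, simp add: vs_def less_Suc_eq numeral_eq_Suc)
  then show "F (x + y) = F x + F y"
    by (simp add: D0 \<Phi>_def algebra_simps)
qed

section \<open>Hyers' direct method\<close>

lemma LIMSEQ_geometric_bound_eq_0:
  fixes v :: "'b::real_normed_vector"
  assumes "w \<longlonglongrightarrow> v" and "\<And>n. norm (w n) \<le> B * r^n" and "0 \<le> r" "r < 1"
  shows "v = 0"
proof -
  have bound: "(\<lambda>n. B * r^n) \<longlonglongrightarrow> B * 0" using assms(3,4) by (intro tendsto_intros) simp
  have "norm v \<le> B * 0"
    by (rule tendsto_le[OF _ bound tendsto_norm[OF assms(1)]]) (use assms(2) in auto)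
  then show ?thesis by simp
qed

lemma rescaled_iterates_converge:
  fixes h :: "'a::real_normed_vector \<Rightarrow> 'b::banach" and t m a :: real
  assumes t: "t > 0" and m: "m > 0" and contr: "m * t^p < 1"
    and h: "\<And>x. norm (h x - m *\<^sub>R h (t *\<^sub>R x)) \<le> a * norm x ^ p"
  shows "\<exists>H. \<forall>x. (\<lambda>n. m^n *\<^sub>R h (t^n *\<^sub>R x)) \<longlonglongrightarrow> H x \<and>
    norm (h x - H x) \<le> a / (1 - m * t^p) * norm x ^ p"
proof -
  define \<rho> where "\<rho> = m * t^p"
  have \<rho>: "0 \<le> \<rho>" "\<rho> < 1" using t m contr by (simp_all add: \<rho>_def)
  define s where "s = (\<lambda>n x. m^n *\<^sub>R h (t^n *\<^sub>R x))"
  define d where "d = (\<lambda>x k. s k x - s (Suc k) x)"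
  have d_bound: "norm (d x k) \<le> a * norm x ^ p * \<rho>^k" for x k
  proof -
    have "d x k = m^k *\<^sub>R (h (t^k *\<^sub>R x) - m *\<^sub>R h (t *\<^sub>R (t^k *\<^sub>R x)))"
      by (simp add: d_def s_def algebra_simps)
    then have "norm (d x k) = m^k * norm (h (t^k *\<^sub>R x) - m *\<^sub>R h (t *\<^sub>R (t^k *\<^sub>R x)))"
      using m by simp
    also have "\<dots> \<le> m^k * (a * norm (t^k *\<^sub>R x) ^ p)" by (rule mult_left_mono[OF h]) (use m in simp)
    also have "\<dots> = a * norm x ^ p * \<rho>^k"
      using t by (simp add: \<rho>_def power_mult_distrib mult_ac flip: power_mult)
    finally show ?thesis .
  qed
  have geometric: "summable (\<lambda>k. a * norm x ^ p * \<rho>^k)" for x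
    using \<rho> by (intro summable_mult summable_geometric) simp
  have summable: "summable (\<lambda>k. norm (d x k))" for x
    by (rule summable_comparison_test'[OF geometric]) (use d_bound in auto)
  have telescope: "s n x = h x - (\<Sum>k<n. d x k)" for n x
  proof -
    have "(\<Sum>k<n. d x k) = s 0 x - s n x" unfolding d_def by (rule sum_lessThan_telescope')
    then show ?thesis by (simp add: s_def)
  qed
  have "(\<lambda>n. s n x) \<longlonglongrightarrow> h x - suminf (d x)" for x
    unfolding telescope
    by (intro tendsto_intros summable_LIMSEQ summable_norm_cancel[OF summable])
  moreover have "norm (h x - (h x - suminf (d x))) \<le> a / (1 - \<rho>) * norm x ^ p" for x
  proof -
    have "norm (suminf (d x)) \<le> (\<Sum>k. norm (d x k))" by (rule summable_norm[OF summable])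
    also have "\<dots> \<le> (\<Sum>k. a * norm x ^ p * \<rho>^k)" by (rule suminf_le[OF d_bound summable geometric])
    also have "\<dots> = a / (1 - \<rho>) * norm x ^ p" using \<rho> by (simp add: suminf_mult suminf_geometric)
    finally show ?thesis by simp
  qed
  ultimately show ?thesis unfolding s_def \<rho>_def by (intro exI[of _ "\<lambda>x. h x - suminf (d x)"]) blast
qed

lemma rescaled_limit_properties:
  fixes h :: "'a::real_normed_vector \<Rightarrow> 'b::banach" and t m a K :: real
  assumes t: "t > 0" and m: "m > 0" and contr: "m * t^p < 1"
    and h: "\<And>x. norm (h x - m *\<^sub>R h (t *\<^sub>R x)) \<le> a * norm x ^ p"
    and odd: "\<And>x. h (- x) = - h x"
    and D: "\<And>u v. norm (Dfun h u v) \<le> K * (norm u ^ p + norm v ^ p)"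
  shows "\<exists>H. (\<forall>x. norm (h x - H x) \<le> a / (1 - m * t^p) * norm x ^ p) \<and> (\<forall>x. m *\<^sub>R H (t *\<^sub>R x) = H x)
     \<and> (\<forall>x. H (- x) = - H x) \<and> (\<forall>u v. Dfun H u v = 0)"
proof -
  define s where "s = (\<lambda>n x. m^n *\<^sub>R h (t^n *\<^sub>R x))"
  obtain H where lim: "\<And>x. (\<lambda>n. s n x) \<longlonglongrightarrow> H x"
    and near: "\<And>x. norm (h x - H x) \<le> a / (1 - m * t^p) * norm x ^ p"
    using rescaled_iterates_converge[OF t m contr h] unfolding s_def by blast
  have "m *\<^sub>R H (t *\<^sub>R x) = H x" for x
  proof (rule LIMSEQ_unique)
    have "(\<lambda>n. m *\<^sub>R s n (t *\<^sub>R x)) = (\<lambda>n. s (Suc n) x)" by (simp add: s_def mult.commute)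
    moreover have "(\<lambda>n. m *\<^sub>R s n (t *\<^sub>R x)) \<longlonglongrightarrow> m *\<^sub>R H (t *\<^sub>R x)"
      by (intro tendsto_intros lim)
    ultimately show "(\<lambda>n. s (Suc n) x) \<longlonglongrightarrow> m *\<^sub>R H (t *\<^sub>R x)" by simp
    show "(\<lambda>n. s (Suc n) x) \<longlonglongrightarrow> H x" by (rule LIMSEQ_Suc[OF lim])
  qed
  moreover have "H (- x) = - H x" for x
  proof (rule LIMSEQ_unique)
    show "(\<lambda>n. s n (- x)) \<longlonglongrightarrow> H (- x)" by (rule lim)
    have "(\<lambda>n. s n (- x)) = (\<lambda>n. - s n x)" by (simp add: s_def odd)
    then show "(\<lambda>n. s n (- x)) \<longlonglongrightarrow> - H x" by (simp add: lim tendsto_minus)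
  qed
  moreover have "Dfun H u v = 0" for u v
  proof -
    have "norm (Dfun (s n) u v) \<le> K * (norm u ^ p + norm v ^ p) * (m * t^p)^n" for n
    proof -
      have "Dfun (s n) u v = m^n *\<^sub>R Dfun h (t^n *\<^sub>R u) (t^n *\<^sub>R v)"
        by (simp add: Dfun_def s_def algebra_simps)
      then have "norm (Dfun (s n) u v) = m^n * norm (Dfun h (t^n *\<^sub>R u) (t^n *\<^sub>R v))"
        using m by simp
      also have "\<dots> \<le> m^n * (K * (norm (t^n *\<^sub>R u) ^ p + norm (t^n *\<^sub>R v) ^ p))"
        using m by (intro mult_left_mono D) auto
      also have "\<dots> = K * (norm u ^ p + norm v ^ p) * (m * t^p)^n"
        using t by (simp add: power_mult_distrib algebra_simps flip: power_mult)
      finally show ?thesis .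
    qed
    moreover have "(\<lambda>n. Dfun (s n) u v) \<longlonglongrightarrow> Dfun H u v"
      unfolding Dfun_def by (intro tendsto_intros lim)
    moreover have "0 \<le> m * t^p" using m t by simp
    ultimately show ?thesis
      using contr by (intro LIMSEQ_geometric_bound_eq_0)
  qed
  ultimately show ?thesis using near by blast
qed

lemma doubling_approximation:
  fixes h :: "'a::real_normed_vector \<Rightarrow> 'b::banach" and q \<epsilon> K :: real
  assumes q: "q > 0" "2^p \<noteq> q"
    and h: "\<And>x. norm (h (2 *\<^sub>R x) - q *\<^sub>R h x) \<le> \<epsilon> * norm x ^ p"
    and odd: "\<And>x. h (- x) = - h x"
    and D: "\<And>u v. norm (Dfun h u v) \<le> K * (norm u ^ p + norm v ^ p)"
  shows "\<exists>H. (\<forall>x. norm (h x - H x) \<le> \<epsilon> / \<bar>2^p - q\<bar> * norm x ^ p) \<and> (\<forall>x. H (2 *\<^sub>R x) = q *\<^sub>R H x)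
     \<and> (\<forall>x. H (- x) = - H x) \<and> (\<forall>u v. Dfun H u v = 0)"
proof (cases "2^p < q")
  case True
  have near: "norm (h x - (1/q) *\<^sub>R h (2 *\<^sub>R x)) \<le> \<epsilon>/q * norm x ^ p" for x
  proof -
    have "h x - (1/q) *\<^sub>R h (2 *\<^sub>R x) = - (1/q) *\<^sub>R (h (2 *\<^sub>R x) - q *\<^sub>R h x)"
      using q by (simp add: algebra_simps)
    then show ?thesis using h[of x] q by (simp add: divide_right_mono)
  qed
  have contr: "1/q * 2^p < 1" using True q by simp
  obtain H where near_H: "\<forall>x. norm (h x - H x) \<le> \<epsilon>/q / (1 - 1/q * 2^p) * norm x ^ p"
    and hom: "\<forall>x. (1/q) *\<^sub>R H (2 *\<^sub>R x) = H x" and props: "\<forall>x. H (- x) = - H x" "\<forall>u v. Dfun H u v = 0"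
    using rescaled_limit_properties[where t=2, OF _ _ contr near odd D] q by auto
  have bound_eq: "\<epsilon>/q / (1 - 1/q * 2^p) = \<epsilon> / \<bar>2^p - q\<bar>" using True q by (simp add: field_simps)
  have "\<forall>x. H (2 *\<^sub>R x) = q *\<^sub>R H x"
  proof
    fix x
    have "q *\<^sub>R H x = q *\<^sub>R ((1/q) *\<^sub>R H (2 *\<^sub>R x))" using hom by simp
    then show "H (2 *\<^sub>R x) = q *\<^sub>R H x" using q by simp
  qed
  then show ?thesis using near_H props unfolding bound_eq by blast
next
  case False
  have near: "norm (h x - q *\<^sub>R h ((1/2) *\<^sub>R x)) \<le> \<epsilon>/2^p * norm x ^ p" for x
    using h[of "(1/2) *\<^sub>R x"] by (simp add: power_mult_distrib power_divide)
  have contr: "q * (1/2)^p < 1" using False q by (simp add: field_simps)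
  obtain H where near_H: "\<forall>x. norm (h x - H x) \<le> \<epsilon>/2^p / (1 - q * (1/2)^p) * norm x ^ p"
    and hom: "\<forall>x. q *\<^sub>R H ((1/2) *\<^sub>R x) = H x" and props: "\<forall>x. H (- x) = - H x" "\<forall>u v. Dfun H u v = 0"
    using rescaled_limit_properties[OF _ _ contr near odd D] q by auto
  have bound_eq: "\<epsilon>/2^p / (1 - q * (1/2)^p) = \<epsilon> / \<bar>2^p - q\<bar>" using False q by (simp add: field_simps)
  have "\<forall>x. H (2 *\<^sub>R x) = q *\<^sub>R H x"
  proof
    fix x
    show "H (2 *\<^sub>R x) = q *\<^sub>R H x" using hom[rule_format, of "2 *\<^sub>R x"] by simp
  qed
  then show ?thesis using near_H props unfolding bound_eq by blast
qed

section \<open>Existence of the approximation\<close>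

lemma Dfun_dilation_bound:
  fixes f :: "'a::real_normed_vector \<Rightarrow> 'b::real_normed_vector" and \<theta> \<alpha> \<beta> :: real
  assumes D: "\<And>x y. norm (Dfun f x y) \<le> \<theta> * (norm x ^ p + norm y ^ p)"
  shows "norm (Dfun (\<lambda>x. \<alpha> *\<^sub>R f (2 *\<^sub>R x) + \<beta> *\<^sub>R f x) u v)
    \<le> \<theta> * (\<bar>\<alpha>\<bar> * 2^p + \<bar>\<beta>\<bar>) * (norm u ^ p + norm v ^ p)"
proof -
  have "Dfun (\<lambda>x. \<alpha> *\<^sub>R f (2 *\<^sub>R x) + \<beta> *\<^sub>R f x) u v = \<alpha> *\<^sub>R Dfun f (2 *\<^sub>R u) (2 *\<^sub>R v) + \<beta> *\<^sub>R Dfun f u v"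
    by (simp add: Dfun_def algebra_simps)
  then have "norm (Dfun (\<lambda>x. \<alpha> *\<^sub>R f (2 *\<^sub>R x) + \<beta> *\<^sub>R f x) u v)
      \<le> \<bar>\<alpha>\<bar> * norm (Dfun f (2 *\<^sub>R u) (2 *\<^sub>R v)) + \<bar>\<beta>\<bar> * norm (Dfun f u v)"
    by (metis norm_scaleR norm_triangle_ineq)
  also have "\<dots> \<le> \<bar>\<alpha>\<bar> * (\<theta> * (norm (2 *\<^sub>R u) ^ p + norm (2 *\<^sub>R v) ^ p)) + \<bar>\<beta>\<bar> * (\<theta> * (norm u ^ p + norm v ^ p))"
    by (intro add_mono mult_left_mono D) auto
  also have "\<dots> = \<theta> * (\<bar>\<alpha>\<bar> * 2^p + \<bar>\<beta>\<bar>) * (norm u ^ p + norm v ^ p)"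
    by (simp add: power_mult_distrib algebra_simps)
  finally show ?thesis .
qed

lemma Dfun_diagonal:
  fixes f :: "'a::real_vector \<Rightarrow> 'b::real_vector"
  assumes odd: "\<And>x. f (- x) = - f x"
  shows "Dfun f x x = 2 *\<^sub>R (f (4 *\<^sub>R x) - 10 *\<^sub>R f (2 *\<^sub>R x) + 16 *\<^sub>R f x)"
proof -
  have "x + 3 *\<^sub>R x = 4 *\<^sub>R x" "3 *\<^sub>R x + x = 4 *\<^sub>R x" "x + x = 2 *\<^sub>R x"
    using scaleR_add_left[of 1 3 x] scaleR_add_left[of 3 1 x] scaleR_add_left[of 1 1 x] by simp_all
  then have "Dfun f x x = 3 *\<^sub>R f (4 *\<^sub>R x) - f (4 *\<^sub>R x) - 12 *\<^sub>R f (2 *\<^sub>R x)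
      + 16 *\<^sub>R (f x + f x) - 12 *\<^sub>R f (2 *\<^sub>R x) + 4 *\<^sub>R f (2 *\<^sub>R x)"
    by (simp add: Dfun_def odd_fun_zero[of f, OF odd])
  also have "\<dots> = 2 *\<^sub>R (f (4 *\<^sub>R x) - 10 *\<^sub>R f (2 *\<^sub>R x) + 16 *\<^sub>R f x)"
  proof -
    define vs where "vs = [f (4 *\<^sub>R x), f (2 *\<^sub>R x), f x]"
    have atoms: "f (4 *\<^sub>R x) = lincomb vs (\<lambda>i. of_bool (i = 0))"
      "f (2 *\<^sub>R x) = lincomb vs (\<lambda>i. of_bool (i = 1))" "f x = lincomb vs (\<lambda>i. of_bool (i = 2))"
      by (simp_all add: lincomb_unit vs_def)
    show ?thesis unfolding atoms lincomb_arith
      by (rule lincomb_cong) (simp add: vs_def less_Suc_eq numeral_eq_Suc)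
  qed
  finally show ?thesis .
qed

lemma additive_cubic_approximation:
  fixes f :: "'a::real_normed_vector \<Rightarrow> 'b::banach" and \<theta> :: real
  assumes p: "(2::real)^p \<noteq> 2" "(2::real)^p \<noteq> 8"
    and odd: "\<And>x. f (- x) = - f x"
    and D: "\<And>x y. norm (Dfun f x y) \<le> \<theta> * (norm x ^ p + norm y ^ p)"
  shows "\<exists>A C. is_additive A \<and> is_cubic C \<and>
    (\<forall>x. norm (f x - A x - C x) \<le> \<theta> / 6 * (1 / \<bar>2^p - 2\<bar> + 1 / \<bar>2^p - 8\<bar>) * norm x ^ p)"
proof -
  define w where "w = (\<lambda>x. f (4 *\<^sub>R x) - 10 *\<^sub>R f (2 *\<^sub>R x) + 16 *\<^sub>R f x)"
  define u where "u = (\<lambda>x. (1/6) *\<^sub>R f (2 *\<^sub>R x) + (-1/3) *\<^sub>R f x)"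
  define v where "v = (\<lambda>x. (-1/6) *\<^sub>R f (2 *\<^sub>R x) + (4/3) *\<^sub>R f x)"
  have w_bound: "norm (w x) \<le> \<theta> * norm x ^ p" for x
    using D[of x x] by (simp add: Dfun_diagonal[of f, OF odd] w_def)
  have second_differences: "u (2 *\<^sub>R x) - 8 *\<^sub>R u x = (1/6) *\<^sub>R w x"
    "v (2 *\<^sub>R x) - 2 *\<^sub>R v x = (-1/6) *\<^sub>R w x" "f x = u x + v x" for x
  proof -
    have quadruple: "2 *\<^sub>R 2 *\<^sub>R x = 4 *\<^sub>R x" by simp
    define vs where "vs = [f (4 *\<^sub>R x), f (2 *\<^sub>R x), f x]"
    have atoms: "f (4 *\<^sub>R x) = lincomb vs (\<lambda>i. of_bool (i = 0))"
      "f (2 *\<^sub>R x) = lincomb vs (\<lambda>i. of_bool (i = 1))" "f x = lincomb vs (\<lambda>i. of_bool (i = 2))"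
      by (simp_all add: lincomb_unit vs_def)
    show "u (2 *\<^sub>R x) - 8 *\<^sub>R u x = (1/6) *\<^sub>R w x" "v (2 *\<^sub>R x) - 2 *\<^sub>R v x = (-1/6) *\<^sub>R w x"
      "f x = u x + v x"
      unfolding u_def v_def w_def quadruple atoms lincomb_arith
      by (rule lincomb_cong, simp add: vs_def less_Suc_eq numeral_eq_Suc)+
  qed
  have u_near: "norm (u (2 *\<^sub>R x) - 8 *\<^sub>R u x) \<le> \<theta>/6 * norm x ^ p"
    and v_near: "norm (v (2 *\<^sub>R x) - 2 *\<^sub>R v x) \<le> \<theta>/6 * norm x ^ p" for x
    using w_bound[of x] unfolding second_differences by simp_all
  have u_odd: "u (- x) = - u x" and v_odd: "v (- x) = - v x" for x
    by (simp_all add: u_def v_def odd)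
  have u_D: "norm (Dfun u x y) \<le> \<theta> * (\<bar>1/6\<bar> * 2^p + \<bar>-1/3\<bar>) * (norm x ^ p + norm y ^ p)"
    and v_D: "norm (Dfun v x y) \<le> \<theta> * (\<bar>-1/6\<bar> * 2^p + \<bar>4/3\<bar>) * (norm x ^ p + norm y ^ p)" for x y
    unfolding u_def v_def by (rule Dfun_dilation_bound[OF D])+
  obtain C where C: "\<forall>x. norm (u x - C x) \<le> \<theta>/6 / \<bar>2^p - 8\<bar> * norm x ^ p"
      "\<forall>x. C (2 *\<^sub>R x) = 8 *\<^sub>R C x" "\<forall>x. C (- x) = - C x" "\<forall>x y. Dfun C x y = 0"
    using doubling_approximation[OF _ _ u_near u_odd u_D] p by auto
  obtain A where A: "\<forall>x. norm (v x - A x) \<le> \<theta>/6 / \<bar>2^p - 2\<bar> * norm x ^ p"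
      "\<forall>x. A (2 *\<^sub>R x) = 2 *\<^sub>R A x" "\<forall>x. A (- x) = - A x" "\<forall>x y. Dfun A x y = 0"
    using doubling_approximation[OF _ _ v_near v_odd v_D] p by auto
  have "is_cubic C" by (rule Dfun_zero_imp_is_cubic) (use C in auto)
  moreover have "is_additive A" by (rule Dfun_zero_imp_is_additive) (use A in auto)
  moreover have "norm (f x - A x - C x) \<le> \<theta> / 6 * (1 / \<bar>2^p - 2\<bar> + 1 / \<bar>2^p - 8\<bar>) * norm x ^ p" for x
  proof -
    have "f x - A x - C x = (v x - A x) + (u x - C x)" by (simp add: second_differences)
    then have "norm (f x - A x - C x) \<le> norm (v x - A x) + norm (u x - C x)" by (metis norm_triangle_ineq)
    also have "\<dots> \<le> \<theta>/6 / \<bar>2^p - 2\<bar> * norm x ^ p + \<theta>/6 / \<bar>2^p - 8\<bar> * norm x ^ p"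
      using A(1) C(1) by (intro add_mono) auto
    finally show ?thesis by (simp add: algebra_simps)
  qed
  ultimately show ?thesis by blast
qed

section \<open>Uniqueness\<close>

lemma is_additive_double:
  assumes "is_additive A"
  shows "A (2 *\<^sub>R x) = 2 *\<^sub>R A x"
  using assms unfolding is_additive_def by (simp add: scaleR_2)

lemma is_cubic_double:
  fixes C :: "'a::real_vector \<Rightarrow> 'b::real_vector"
  assumes "is_cubic C"
  shows "C (2 *\<^sub>R y) = 8 *\<^sub>R C y"
proof -
  have cubic: "C (x + 2 *\<^sub>R y) - 3 *\<^sub>R C (x + y) + 3 *\<^sub>R C x - C (x - y) = 6 *\<^sub>R C y" for x y
    using assms unfolding is_cubic_def by blast
  have "6 *\<^sub>R C 0 = 0" using cubic[of 0 0] by simp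
  then have zero: "C 0 = 0" by simp
  have "-y + 2 *\<^sub>R y = y" "-y - y = -(2 *\<^sub>R y)" by (simp_all add: scaleR_2)
  then have "C y + 3 *\<^sub>R C (-y) - C (-(2 *\<^sub>R y)) = 6 *\<^sub>R C y"
    and "C (-(2 *\<^sub>R y)) - 3 *\<^sub>R C (-y) - C y = 6 *\<^sub>R C (-y)"
    using cubic[of "-y" y] cubic[of 0 "-y"] zero by simp_all
  then have "6 *\<^sub>R (C y + C (-y))
      = (C y + 3 *\<^sub>R C (-y) - C (-(2 *\<^sub>R y))) + (C (-(2 *\<^sub>R y)) - 3 *\<^sub>R C (-y) - C y)"
    by (simp only: scaleR_add_right)
  then have "6 *\<^sub>R (C y + C (-y)) = 0" by simp
  then have odd: "C (-y) = - C y" by (simp add: eq_neg_iff_add_eq_0 add.commute)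
  have "C (2 *\<^sub>R y) - 3 *\<^sub>R C y + C y = 6 *\<^sub>R C y" using cubic[of 0 y] zero odd by simp
  then have "C (2 *\<^sub>R y) = 6 *\<^sub>R C y + 3 *\<^sub>R C y - C y" by (simp add: algebra_simps)
  also have "\<dots> = 8 *\<^sub>R C y" using scaleR_add_left[of 6 3 "C y"] scaleR_diff_left[of 9 1 "C y"] by simp
  finally show ?thesis .
qed

lemma dilation_power:
  fixes g :: "'a::real_vector \<Rightarrow> 'b::real_vector"
  assumes "\<And>z. g (2 *\<^sub>R z) = k *\<^sub>R g z"
  shows "g (2^n *\<^sub>R x) = k^n *\<^sub>R g x"
proof (induction n)
  case (Suc n)
  have "g (2^Suc n *\<^sub>R x) = k *\<^sub>R g (2^n *\<^sub>R x)" using assms[of "2^n *\<^sub>R x"] by simp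
  with Suc show ?case by simp
qed simp

lemma homogeneous_bounded_eq_0:
  fixes g :: "'a::real_normed_vector \<Rightarrow> 'b::real_normed_vector"
  assumes hom: "\<And>z. g (2 *\<^sub>R z) = k *\<^sub>R g z" and k: "k > 0" "k \<noteq> 2^p"
    and bound: "\<And>x. norm (g x) \<le> M * norm x ^ p"
  shows "g x = 0"
proof (cases "k > 2^p")
  case True
  have "norm (g x) \<le> M * norm x ^ p * (2^p / k)^n" for n
  proof -
    have "g x = (1/k)^n *\<^sub>R g (2^n *\<^sub>R x)" using k by (simp add: dilation_power[of g, OF hom] power_one_over)
    then have "norm (g x) = (1/k)^n * norm (g (2^n *\<^sub>R x))" using k by simp
    also have "\<dots> \<le> (1/k)^n * (M * norm (2^n *\<^sub>R x) ^ p)" using k by (intro mult_left_mono bound) auto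
    also have "\<dots> = M * norm x ^ p * (2^p / k)^n"
      by (simp add: power_mult_distrib power_divide algebra_simps flip: power_mult)
    finally show ?thesis .
  qed
  with True k show ?thesis by (intro LIMSEQ_geometric_bound_eq_0[OF tendsto_const, where r="2^p/k"]) auto
next
  case False
  have "norm (g x) \<le> M * norm x ^ p * (k / 2^p)^n" for n
  proof -
    have "g x = k^n *\<^sub>R g ((1/2)^n *\<^sub>R x)"
      using dilation_power[of g k n "(1/2)^n *\<^sub>R x", OF hom] by (simp add: power_one_over)
    then have "norm (g x) = k^n * norm (g ((1/2)^n *\<^sub>R x))" using k by simp
    also have "\<dots> \<le> k^n * (M * norm ((1/2)^n *\<^sub>R x) ^ p)" using k by (intro mult_left_mono bound) auto
    also have "\<dots> = M * norm x ^ p * (k / 2^p)^n"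
      by (simp add: power_mult_distrib power_divide algebra_simps flip: power_mult)
    finally show ?thesis .
  qed
  with False k show ?thesis by (intro LIMSEQ_geometric_bound_eq_0[OF tendsto_const, where r="k/2^p"]) auto
qed

lemma additive_cubic_unique:
  fixes f :: "'a::real_normed_vector \<Rightarrow> 'b::real_normed_vector"
  assumes p: "(2::real)^p \<noteq> 2" "(2::real)^p \<noteq> 8"
    and A: "is_additive A" "is_additive A'" and C: "is_cubic C" "is_cubic C'"
    and near: "\<And>x. norm (f x - A x - C x) \<le> B * norm x ^ p" "\<And>x. norm (f x - A' x - C' x) \<le> B * norm x ^ p"
  shows "A' = A \<and> C' = C"
proof -
  define a where "a = (\<lambda>x. A' x - A x)"
  define c where "c = (\<lambda>x. C' x - C x)"
  have a_hom: "a (2 *\<^sub>R z) = 2 *\<^sub>R a z" and c_hom: "c (2 *\<^sub>R z) = 8 *\<^sub>R c z" for z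
    by (simp_all add: a_def c_def is_additive_double[OF A(1)] is_additive_double[OF A(2)]
        is_cubic_double[OF C(1)] is_cubic_double[OF C(2)] algebra_simps)
  define s where "s = (\<lambda>x. a x + c x)"
  have s_bound: "norm (s x) \<le> 2 * B * norm x ^ p" for x
  proof -
    have "s x = (f x - A x - C x) - (f x - A' x - C' x)" by (simp add: s_def a_def c_def algebra_simps)
    then have "norm (s x) \<le> norm (f x - A x - C x) + norm (f x - A' x - C' x)" by (metis norm_triangle_ineq4)
    then show ?thesis using near[of x] by simp
  qed
  have parts: "a x = (1/6) *\<^sub>R (8 *\<^sub>R s x - s (2 *\<^sub>R x))" "c x = (1/6) *\<^sub>R (s (2 *\<^sub>R x) - 2 *\<^sub>R s x)" for x
  proof -
    define vs where "vs = [a x, c x]"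
    have atoms: "a x = lincomb vs (\<lambda>i. of_bool (i = 0))" "c x = lincomb vs (\<lambda>i. of_bool (i = 1))"
      by (simp_all add: lincomb_unit vs_def)
    show "a x = (1/6) *\<^sub>R (8 *\<^sub>R s x - s (2 *\<^sub>R x))" "c x = (1/6) *\<^sub>R (s (2 *\<^sub>R x) - 2 *\<^sub>R s x)"
      unfolding s_def a_hom c_hom atoms lincomb_arith
      by (rule lincomb_cong, simp add: vs_def less_Suc_eq)+
  qed
  have s_double: "norm (s (2 *\<^sub>R x)) \<le> 2 * B * 2^p * norm x ^ p" for x
    using s_bound[of "2 *\<^sub>R x"] by (simp add: power_mult_distrib)
  have a_bound: "norm (a x) \<le> (8 + 2^p) * B / 3 * norm x ^ p" for x
  proof -
    have "norm (a x) \<le> (8 * norm (s x) + norm (s (2 *\<^sub>R x))) / 6"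
      unfolding parts(1) using norm_triangle_ineq4[of "8 *\<^sub>R s x" "s (2 *\<^sub>R x)"] by simp
    also have "\<dots> \<le> (8 * (2 * B * norm x ^ p) + 2 * B * 2^p * norm x ^ p) / 6"
      by (intro divide_right_mono add_mono mult_left_mono s_bound s_double) auto
    also have "\<dots> = (8 + 2^p) * B / 3 * norm x ^ p" by (simp add: algebra_simps)
    finally show ?thesis .
  qed
  have c_bound: "norm (c x) \<le> (2^p + 2) * B / 3 * norm x ^ p" for x
  proof -
    have "norm (c x) \<le> (norm (s (2 *\<^sub>R x)) + 2 * norm (s x)) / 6"
      unfolding parts(2) using norm_triangle_ineq4[of "s (2 *\<^sub>R x)" "2 *\<^sub>R s x"] by simp
    also have "\<dots> \<le> (2 * B * 2^p * norm x ^ p + 2 * (2 * B * norm x ^ p)) / 6"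
      by (intro divide_right_mono add_mono mult_left_mono s_bound s_double) auto
    also have "\<dots> = (2^p + 2) * B / 3 * norm x ^ p" by (simp add: algebra_simps)
    finally show ?thesis .
  qed
  have "a x = 0" for x
    by (rule homogeneous_bounded_eq_0[where k=2, OF a_hom _ _ a_bound]) (use p in auto)
  moreover have "c x = 0" for x
    by (rule homogeneous_bounded_eq_0[where k=8, OF c_hom _ _ c_bound]) (use p in auto)
  ultimately show ?thesis by (auto simp: a_def c_def)
qed

theorem corollary3p4:
  fixes f :: "'a::real_normed_vector \<Rightarrow> 'b::banach"
    and p :: nat and \<theta> :: nat
  assumes "p \<noteq> 1" and "p \<noteq> 3"
    and odd: "\<And>x. f (- x) = - f x"
    and ineq: "\<And>x y. norm (Dfun f x y) \<le> real \<theta> * (norm x ^ p + norm y ^ p)"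
  shows "\<exists>A C. is_additive A \<and> is_cubic C \<and>
           (\<forall>x. norm (f x - A x - C x) \<le> real \<theta> / 6 *
              (1 / \<bar>2 ^ p - 2\<bar> + 1 / \<bar>2 ^ p - 8\<bar>) * norm x ^ p) \<and>
           (\<forall>A' C'. is_additive A' \<and> is_cubic C' \<and>
              (\<forall>x. norm (f x - A' x - C' x) \<le> real \<theta> / 6 *
                 (1 / \<bar>2 ^ p - 2\<bar> + 1 / \<bar>2 ^ p - 8\<bar>) * norm x ^ p)
              \<longrightarrow> A' = A \<and> C' = C)"
proof -
  have "(2::real)^p \<noteq> 2^1" "(2::real)^p \<noteq> 2^3"
    using assms(1,2) by (simp_all only: power_inject_exp one_less_numeral_iff semiring_norm(76) simp_thms)
  then have p: "(2::real)^p \<noteq> 2" "(2::real)^p \<noteq> 8" by simp_all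
  obtain A C where "is_additive A" "is_cubic C"
    and "\<forall>x. norm (f x - A x - C x) \<le> real \<theta> / 6 * (1 / \<bar>2^p - 2\<bar> + 1 / \<bar>2^p - 8\<bar>) * norm x ^ p"
    using additive_cubic_approximation[OF p odd ineq] by blast
  then show ?thesis using additive_cubic_unique[OF p] by blast
qed

end
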